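(* Let $T$ be a triangle with maximum angle $\theta_M<\pi$, and let $e_1,e_2$ be the two edges of $T$ adjacent to the maximum angle, with unit tangent vectors $\mathbf t_{e_1},\mathbf t_{e_2}$. Then for every segment $e\subseteq T$ with unit direction vector $\mathbf t_e$, $$\|\mathbf v_h\cdot\mathbf t_e\|_{0,e}\lesssim(\sin\theta_M)^{-1/2}\sum_{i=1,2}\|\mathbf v_h\cdot\mathbf t_{e_i}\|_{0,e_i}\qquad\forall\mathbf v_h\in[\mathcal P_0(T)]^2.$$
   Context: $[\mathcal P_0(T)]^2$ denotes constant vector fields on $T$; $\|\cdot\|_{0,e}$ is the $L^2$ norm on the segment $e$. $A\lesssim B$ means $A\le CB$ with an absolute constant $C$. *)

theory Defs
  imports "HOL-Analysis.Analysis"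
begin

definition vec_angle :: "real^2 \<Rightarrow> real^2 \<Rightarrow> real" where
  "vec_angle u w = arccos ((u \<bullet> w) / (norm u * norm w))"

definition tri_angle :: "real^2 \<Rightarrow> real^2 \<Rightarrow> real^2 \<Rightarrow> real" where
  "tri_angle a b c = vec_angle (b - a) (c - a)"

definition unit_tangent :: "real^2 \<Rightarrow> real^2 \<Rightarrow> real^2" where
  "unit_tangent x y = (1 / norm (y - x)) *\<^sub>R (y - x)"

text \<open>L2 norm on the segment [x,y] of a scalar function f, via the arclength
  parametrisation s \<mapsto> x + s (y - x), s in [0,1].\<close>
definition seg_L2 :: "(real^2 \<Rightarrow> real) \<Rightarrow> real^2 \<Rightarrow> real^2 \<Rightarrow> real" where
  "seg_L2 f x y = sqrt (dist x y * integral {0..1} (\<lambda>s. (f (x + s *\<^sub>R (y - x)))\<^sup>2))"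

end

theory Submission
  imports Defs
begin

text \<open>Since \<open>v\<close> is constant, \<open>seg_L2\<close> of its tangential component along \<open>[x, y]\<close> is
  \<open>\<bar>v \<bullet> (y - x)\<bar> / sqrt \<bar>y - x\<bar>\<close>. Inside the triangle, \<open>y - x = \<alpha> (q - p) + \<beta> (r - p)\<close>
  with \<open>\<bar>\<alpha>\<bar>, \<bar>\<beta>\<bar> \<le> 1\<close>, and Cramer's rule bounds \<open>\<bar>\<alpha>\<bar>\<close> by \<open>\<bar>y - x\<bar> \<bar>r - p\<bar> / D\<close> (and
  \<open>\<bar>\<beta>\<bar>\<close> symmetrically), where \<open>D\<close> is the area determinant. Together with \<open>\<alpha>\<^sup>2 \<le> \<bar>\<alpha>\<bar>\<close>
  this gives the estimate with constant \<open>sqrt (\<bar>q - p\<bar> \<bar>r - p\<bar> / D)\<close>, which is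
  \<open>(sin \<theta>)\<^sup>-\<^sup>1\<^sup>/\<^sup>2\<close> for the angle \<open>\<theta>\<close> at \<open>p\<close>. The argument works at any vertex with \<open>C = 1\<close>.\<close>

definition cross2 :: "real^2 \<Rightarrow> real^2 \<Rightarrow> real" where
  "cross2 u w = u$1 * w$2 - u$2 * w$1"

lemma inner_real2: "(u::real^2) \<bullet> w = u$1 * w$1 + u$2 * w$2"
  by (simp add: inner_vec_def sum_2)

lemma norm_real2_square: "(norm (u::real^2))\<^sup>2 = (u$1)\<^sup>2 + (u$2)\<^sup>2"
  by (simp only: power2_norm_eq_inner inner_real2) (simp add: power2_eq_square)

lemma cross2_square: "(cross2 u w)\<^sup>2 = (norm u)\<^sup>2 * (norm w)\<^sup>2 - (u \<bullet> w)\<^sup>2"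
  unfolding norm_real2_square inner_real2 cross2_def by (simp add: algebra_simps power2_eq_square)

lemma abs_cross2_le: "\<bar>cross2 u w\<bar> \<le> norm u * norm w"
  by (rule power2_le_imp_le) (simp_all add: cross2_square power_mult_distrib)

lemma cross2_scaleR_add_left: "cross2 (\<alpha> *\<^sub>R u + \<beta> *\<^sub>R w) w = \<alpha> * cross2 u w"
  by (simp add: cross2_def algebra_simps)

lemma cross2_scaleR_add_right: "cross2 u (\<alpha> *\<^sub>R u + \<beta> *\<^sub>R w) = \<beta> * cross2 u w"
  by (simp add: cross2_def algebra_simps)

lemma cross2_eq_0_imp_scaleR:
  assumes "cross2 u w = 0" "u \<noteq> 0"
  shows "w = ((u \<bullet> w) / (u \<bullet> u)) *\<^sub>R u"
proof -
  have "w$i * (u \<bullet> u) = (u \<bullet> w) * u$i" for i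
    using exhaust_2[of i] assms(1)
    by (auto simp: inner_real2 cross2_def algebra_simps power2_eq_square)
  then show ?thesis
    using assms(2) by (simp add: vec_eq_iff field_simps)
qed

lemma cross2_eq_0_imp_collinear:
  assumes "cross2 (q - p) (r - p) = 0"
  shows "collinear {p, q, r}"
proof -
  have "collinear {0, q - p, r - p}"
    using cross2_eq_0_imp_scaleR[OF assms] by (auto simp: collinear_lemma)
  then show ?thesis
    using collinear_3[of q p r] by (simp add: insert_commute)
qed

lemma sin_vec_angle:
  assumes "u \<noteq> 0" "w \<noteq> 0"
  shows "sin (vec_angle u w) = \<bar>cross2 u w\<bar> / (norm u * norm w)"
proof -
  define c where "c = (u \<bullet> w) / (norm u * norm w)"
  have "\<bar>c\<bar> \<le> 1"
    using Cauchy_Schwarz_ineq2[of u w] assms by (simp add: c_def abs_divide divide_le_eq_1)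
  then have "sin (vec_angle u w) = sqrt (1 - c\<^sup>2)"
    unfolding vec_angle_def c_def[symmetric] by (intro sin_arccos) auto
  also have "1 - c\<^sup>2 = (cross2 u w / (norm u * norm w))\<^sup>2"
    using assms by (simp add: c_def cross2_square field_simps)
  finally show ?thesis
    by (simp add: abs_divide)
qed

lemma sin_vec_angle_powr_neg_half:
  assumes "cross2 u w \<noteq> 0"
  shows "sin (vec_angle u w) powr (-1/2) = sqrt (norm u * norm w / \<bar>cross2 u w\<bar>)"
proof -
  have "u \<noteq> 0" "w \<noteq> 0"
    using assms by (auto simp: cross2_def)
  then have "sin (vec_angle u w) powr (-1/2) = inverse (sqrt (\<bar>cross2 u w\<bar> / (norm u * norm w)))"
    by (simp add: sin_vec_angle powr_minus powr_half_sqrt)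
  then show ?thesis
    by (simp add: real_sqrt_divide inverse_eq_divide)
qed

lemma seg_L2_const: "seg_L2 (\<lambda>z. c) x y = \<bar>c\<bar> * sqrt (dist x y)"
  unfolding seg_L2_def by (simp add: real_sqrt_mult mult.commute)

lemma divide_mult_sqrt: "0 \<le> n \<Longrightarrow> a / n * sqrt n = a / sqrt (n::real)"
  by (cases "n = 0") (simp_all add: field_simps)

lemma seg_L2_inner_unit_tangent:
  "seg_L2 (\<lambda>z. v \<bullet> unit_tangent x y) x y = \<bar>v \<bullet> (y - x)\<bar> / sqrt (norm (y - x))"
proof -
  have "\<bar>v \<bullet> unit_tangent x y\<bar> = \<bar>v \<bullet> (y - x)\<bar> / norm (y - x)"
    by (simp add: unit_tangent_def abs_mult)
  moreover have "dist x y = norm (y - x)"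
    by (simp add: dist_norm norm_minus_commute)
  ultimately show ?thesis
    unfolding seg_L2_const by (simp only: divide_mult_sqrt norm_ge_zero)
qed

lemma convex_hull_3_coords:
  assumes "x \<in> convex hull {p, q, r}"
  obtains s t where "0 \<le> s" "0 \<le> t" "s + t \<le> 1" "x - p = s *\<^sub>R (q - p) + t *\<^sub>R (r - p)"
proof -
  obtain a b c where abc: "0 \<le> a" "0 \<le> b" "0 \<le> c" "a + b + c = 1"
    "x = a *\<^sub>R p + b *\<^sub>R q + c *\<^sub>R r"
    using assms unfolding convex_hull_3 by blast
  then have "x - p = b *\<^sub>R (q - p) + c *\<^sub>R (r - p)"
    by (simp add: algebra_simps flip: scaleR_add_left)
  with abc show ?thesis
    using that[of b c] by simp
qed

lemma convex_hull_3_diff_coords: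
  assumes "x \<in> convex hull {p, q, r}" "y \<in> convex hull {p, q, r}"
  obtains \<alpha> \<beta> where "\<bar>\<alpha>\<bar> \<le> 1" "\<bar>\<beta>\<bar> \<le> 1" "y - x = \<alpha> *\<^sub>R (q - p) + \<beta> *\<^sub>R (r - p)"
proof -
  obtain s t where "0 \<le> s" "0 \<le> t" "s + t \<le> 1" and x: "x - p = s *\<^sub>R (q - p) + t *\<^sub>R (r - p)"
    using convex_hull_3_coords[OF assms(1)] .
  moreover obtain s' t' where "0 \<le> s'" "0 \<le> t'" "s' + t' \<le> 1"
    and y: "y - p = s' *\<^sub>R (q - p) + t' *\<^sub>R (r - p)"
    using convex_hull_3_coords[OF assms(2)] .
  moreover have "y - x = (s' - s) *\<^sub>R (q - p) + (t' - t) *\<^sub>R (r - p)"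
  proof -
    have "y - x = (y - p) - (x - p)"
      by simp
    also have "\<dots> = (s' - s) *\<^sub>R (q - p) + (t' - t) *\<^sub>R (r - p)"
      unfolding x y by (simp add: scaleR_diff_left)
    finally show ?thesis .
  qed
  moreover have "\<bar>s' - s\<bar> \<le> 1" "\<bar>t' - t\<bar> \<le> 1"
    using calculation by linarith+
  ultimately show ?thesis
    using that by blast
qed

lemma abs_div_sqrt_le_sqrt:
  fixes \<alpha> L D b :: real
  assumes "\<bar>\<alpha>\<bar> \<le> 1" "0 < L" "0 < D" "\<bar>\<alpha>\<bar> * D \<le> L * b"
  shows "\<bar>\<alpha>\<bar> / sqrt L \<le> sqrt (b / D)"
proof -
  have "\<alpha>\<^sup>2 \<le> \<bar>\<alpha>\<bar>"
    using assms(1) by (metis abs_ge_zero mult_left_le power2_abs power2_eq_square)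
  then have "\<alpha>\<^sup>2 * D \<le> L * b"
    using assms(3,4) by (meson mult_right_mono less_imp_le order_trans)
  then have "\<alpha>\<^sup>2 / L \<le> b / D"
    using assms(2,3) by (simp add: field_simps)
  then have "sqrt (\<alpha>\<^sup>2 / L) \<le> sqrt (b / D)"
    by (rule real_sqrt_le_mono)
  then show ?thesis
    by (simp add: real_sqrt_divide)
qed

lemma abs_inner_div_sqrt_norm_le:
  fixes u w d v :: "real^2"
  assumes "cross2 u w \<noteq> 0" "d \<noteq> 0" "d = \<alpha> *\<^sub>R u + \<beta> *\<^sub>R w" "\<bar>\<alpha>\<bar> \<le> 1" "\<bar>\<beta>\<bar> \<le> 1"
  shows "\<bar>v \<bullet> d\<bar> / sqrt (norm d)
    \<le> sqrt (norm u * norm w / \<bar>cross2 u w\<bar>) * (\<bar>v \<bullet> u\<bar> / sqrt (norm u) + \<bar>v \<bullet> w\<bar> / sqrt (norm w))"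
proof -
  define D where "D = \<bar>cross2 u w\<bar>"
  have "0 < D" "u \<noteq> 0" "w \<noteq> 0"
    using assms(1) by (auto simp: D_def cross2_def)
  have \<alpha>_bound: "\<bar>\<alpha>\<bar> / sqrt (norm d) \<le> sqrt (norm w / D)"
  proof (rule abs_div_sqrt_le_sqrt)
    show "\<bar>\<alpha>\<bar> * D \<le> norm d * norm w"
      using abs_cross2_le[of d w] by (simp add: assms(3) cross2_scaleR_add_left D_def abs_mult)
  qed (use assms \<open>0 < D\<close> in auto)
  have \<beta>_bound: "\<bar>\<beta>\<bar> / sqrt (norm d) \<le> sqrt (norm u / D)"
  proof (rule abs_div_sqrt_le_sqrt)
    show "\<bar>\<beta>\<bar> * D \<le> norm d * norm u"
      using abs_cross2_le[of u d] by (simp add: assms(3) cross2_scaleR_add_right D_def abs_mult mult.commute)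
  qed (use assms \<open>0 < D\<close> in auto)
  have "\<bar>v \<bullet> d\<bar> \<le> \<bar>\<alpha>\<bar> * \<bar>v \<bullet> u\<bar> + \<bar>\<beta>\<bar> * \<bar>v \<bullet> w\<bar>"
    unfolding assms(3) inner_add_right inner_scaleR_right by (metis abs_mult abs_triangle_ineq)
  then have "\<bar>v \<bullet> d\<bar> / sqrt (norm d)
      \<le> (\<bar>\<alpha>\<bar> * \<bar>v \<bullet> u\<bar> + \<bar>\<beta>\<bar> * \<bar>v \<bullet> w\<bar>) / sqrt (norm d)"
    by (simp add: divide_right_mono)
  also have "\<dots> = \<bar>v \<bullet> u\<bar> * (\<bar>\<alpha>\<bar> / sqrt (norm d)) + \<bar>v \<bullet> w\<bar> * (\<bar>\<beta>\<bar> / sqrt (norm d))"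
    by (simp add: add_divide_distrib mult.commute)
  also have "\<dots> \<le> \<bar>v \<bullet> u\<bar> * sqrt (norm w / D) + \<bar>v \<bullet> w\<bar> * sqrt (norm u / D)"
    using \<alpha>_bound \<beta>_bound by (intro add_mono mult_left_mono) auto
  also have "\<dots> = sqrt (norm u * norm w / D) * (\<bar>v \<bullet> u\<bar> / sqrt (norm u) + \<bar>v \<bullet> w\<bar> / sqrt (norm w))"
  proof -
    have cancel: "sqrt (a * b) * (c / sqrt a) = c * sqrt b" if "0 < a" for a b c :: real
      using that by (simp add: real_sqrt_mult field_simps)
    show ?thesis
      using cancel[of "norm u" "norm w / D"] cancel[of "norm w" "norm u / D"] \<open>u \<noteq> 0\<close> \<open>w \<noteq> 0\<close>
      by (simp add: distrib_left mult.commute)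
  qed
  finally show ?thesis
    unfolding D_def .
qed

theorem lemmaC3:
  "\<exists>C>0. \<forall>(p::real^2) q r x y (v::real^2).
     \<not> collinear {p, q, r} \<and>
     tri_angle q p r \<le> tri_angle p q r \<and> tri_angle r p q \<le> tri_angle p q r \<and>
     x \<in> convex hull {p, q, r} \<and> y \<in> convex hull {p, q, r} \<and> x \<noteq> y \<longrightarrow>
     seg_L2 (\<lambda>z. v \<bullet> unit_tangent x y) x y
       \<le> C * (sin (tri_angle p q r)) powr (-1/2) *
           (seg_L2 (\<lambda>z. v \<bullet> unit_tangent p q) p q + seg_L2 (\<lambda>z. v \<bullet> unit_tangent p r) p r)"
proof (intro exI[of _ 1] conjI allI impI)
  fix p q r x y v :: "real^2"
  assume "\<not> collinear {p, q, r} \<and>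
     tri_angle q p r \<le> tri_angle p q r \<and> tri_angle r p q \<le> tri_angle p q r \<and>
     x \<in> convex hull {p, q, r} \<and> y \<in> convex hull {p, q, r} \<and> x \<noteq> y"
  then have "cross2 (q - p) (r - p) \<noteq> 0" and hull: "x \<in> convex hull {p, q, r}" "y \<in> convex hull {p, q, r}"
    and "y - x \<noteq> 0"
    using cross2_eq_0_imp_collinear by auto
  obtain \<alpha> \<beta> where coords: "\<bar>\<alpha>\<bar> \<le> 1" "\<bar>\<beta>\<bar> \<le> 1" "y - x = \<alpha> *\<^sub>R (q - p) + \<beta> *\<^sub>R (r - p)"
    using convex_hull_3_diff_coords[OF hull] .
  have "sin (tri_angle p q r) powr (-1/2)
      = sqrt (norm (q - p) * norm (r - p) / \<bar>cross2 (q - p) (r - p)\<bar>)"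
    unfolding tri_angle_def by (rule sin_vec_angle_powr_neg_half) fact
  then show "seg_L2 (\<lambda>z. v \<bullet> unit_tangent x y) x y
       \<le> 1 * (sin (tri_angle p q r)) powr (-1/2) *
           (seg_L2 (\<lambda>z. v \<bullet> unit_tangent p q) p q + seg_L2 (\<lambda>z. v \<bullet> unit_tangent p r) p r)"
    using abs_inner_div_sqrt_norm_le[OF \<open>cross2 (q - p) (r - p) \<noteq> 0\<close> \<open>y - x \<noteq> 0\<close> coords(3,1,2)]
    by (simp only: seg_L2_inner_unit_tangent mult_1)
qed simp

end
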